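(* Let $\mathbf{X}=(X_1,\ldots,X_d)$ be a random vector with values in $\mathcal{X}_1\times\cdots\times\mathcal{X}_d$ whose components $X_1,\ldots,X_d$ are mutually independent, let $\eta:\mathcal{X}_1\times\cdots\times\mathcal{X}_d\to\mathcal{Y}$ be a measurable function (the model, taken in the setting of the classical functional ANOVA decomposition), and let $Y=\eta(\mathbf{X})$. Let $k_{\mathcal{Y}}$ be a positive definite kernel on $\mathcal{Y}$ such that for every $A\subseteq\{1,\ldots,d\}$ and every $\mathbf{x}_A\in\mathcal{X}_A$, $\mathbb{E}_{\xi\sim \mathrm{P}_{Y\mid \mathbf{X}_A=\mathbf{x}_A}} k_{\mathcal{Y}}(\xi,\xi)<\infty$ (with the convention $\mathrm{P}_{Y\mid \mathbf{X}_\emptyset}=\mathrm{P}_Y$). Define $\mathrm{MMD}^2_{\mathrm{tot}}=\mathbb{E}\,k_{\mathcal{Y}}(Y,Y)-\mathbb{E}\,k_{\mathcal{Y}}(Y,Y')$, where $Y'$ is an independent copy of $Y$. Then $$\mathrm{MMD}^2_{\mathrm{tot}}=\sum_{A\subseteq\{1,\ldots,d\}}\mathrm{MMD}^2_A,\qquad \mathrm{MMD}^2_A=\sum_{B\subseteq A}(-1)^{|A|-|B|}\,\mathbb{E}_{\mathbf{X}_B}\Big(\mathrm{MMD}^2\big(\mathrm{P}_Y,\mathrm{P}_{Y\mid \mathbf{X}_B}\big)\Big).$$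
   Context: For $A=\{l_1,\ldots,l_{|A|}\}\subseteq\{1,\ldots,d\}$, $\mathbf{X}_A=(X_{l_1},\ldots,X_{l_{|A|}})\in\mathcal{X}_A=\mathcal{X}_{l_1}\times\cdots\times\mathcal{X}_{l_{|A|}}$ and $\mathrm{P}_{Y\mid\mathbf{X}_A}$ denotes the conditional distribution of $Y$ given $\mathbf{X}_A$. For probability measures $\mathrm{P},\mathrm{Q}$ on $\mathcal{Y}$, the squared maximum mean discrepancy is $\mathrm{MMD}^2(\mathrm{P},\mathrm{Q})=\mathbb{E}\,k_{\mathcal{Y}}(\xi,\xi')-2\,\mathbb{E}\,k_{\mathcal{Y}}(\xi,\zeta)+\mathbb{E}\,k_{\mathcal{Y}}(\zeta,\zeta')$ with $\xi,\xi'\sim\mathrm{P}$, $\zeta,\zeta'\sim\mathrm{Q}$ all independent; equivalently it is the squared RKHS distance between the kernel mean embeddings of $\mathrm{P}$ and $\mathrm{Q}$. $\mathbb{E}_{\mathbf{X}_B}(\mathrm{MMD}^2(\mathrm{P}_Y,\mathrm{P}_{Y\mid\mathbf{X}_B}))$ is the expectation over $\mathbf{X}_B$ of the MMD between $\mathrm{P}_Y$ and the conditional law of $Y$ given $\mathbf{X}_B$; for $B=\emptyset$ it equals $0$. The sum over $B\subseteq A$ includes $B=\emptyset$ and $B=A$. *)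

theory Defs
  imports "HOL-Probability.Probability"
begin

definition pd_kernel :: "('y \<Rightarrow> 'y \<Rightarrow> real) \<Rightarrow> 'y set \<Rightarrow> bool" where
  "pd_kernel k Y \<longleftrightarrow> (\<forall>x\<in>Y. \<forall>y\<in>Y. k x y = k y x) \<and>
     (\<forall>(n::nat) (c::nat \<Rightarrow> real) (x::nat \<Rightarrow> 'y). (\<forall>i<n. x i \<in> Y) \<longrightarrow>
        0 \<le> (\<Sum>i<n. \<Sum>j<n. c i * c j * k (x i) (x j)))"

definition mmd_sq :: "('y \<Rightarrow> 'y \<Rightarrow> real) \<Rightarrow> 'y measure \<Rightarrow> 'y measure \<Rightarrow> real" where
  "mmd_sq k P Q =
     (\<integral>z. k (fst z) (snd z) \<partial>(P \<Otimes>\<^sub>M P))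
     - 2 * (\<integral>z. k (fst z) (snd z) \<partial>(P \<Otimes>\<^sub>M Q))
     + (\<integral>z. k (fst z) (snd z) \<partial>(Q \<Otimes>\<^sub>M Q))"

text \<open>Conditional law of Y = eta(X) given X_B = xB, for independent inputs with
  marginal laws P i on the index set I: the law of eta(xB, X_{I-B}).
  For B = {} this is the law of eta under the product of the marginals, i.e. P_Y.\<close>
definition cond_law ::
  "'i set \<Rightarrow> ('i \<Rightarrow> 'x measure) \<Rightarrow> 'y measure \<Rightarrow> (('i \<Rightarrow> 'x) \<Rightarrow> 'y) \<Rightarrow> 'i set \<Rightarrow> ('i \<Rightarrow> 'x) \<Rightarrow> 'y measure" where
  "cond_law I P N \<eta> B xB = distr (\<Pi>\<^sub>M i\<in>I - B. P i) N (\<lambda>z. \<eta> (merge B (I - B) (xB, z)))"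

end

theory Submission
  imports Defs
begin

text \<open>The terms \<open>MMD\<^sup>2\<^sub>A\<close> are the Moebius transform of \<open>B \<mapsto> E MMD\<^sup>2(P\<^sub>Y, P\<^sub>Y\<^sub>|\<^sub>X\<^sub>B)\<close> on the
  subset lattice, so their sum over all \<open>A \<subseteq> {1..d}\<close> is the term for \<open>B = {1..d}\<close>. Given all
  inputs, \<open>Y\<close> is deterministic, so that term is \<open>E\<^sub>Y MMD\<^sup>2(P\<^sub>Y, \<delta>\<^sub>Y)\<close>
  \<open>= E k(Y',Y'') - 2 E k(Y',Y) + E k(Y,Y)\<close> with \<open>Y', Y''\<close> independent copies of \<open>Y\<close>, and the first
  two terms combine to \<open>- E k(Y,Y')\<close>. Independence of the inputs is needed only to identify the
  unconditioned law (\<open>B = {}\<close>) with \<open>P\<^sub>Y\<close>, which makes \<open>k(Y,Y)\<close> integrable; by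
  \<open>|k(a,b)| \<le> (k(a,a) + k(b,b))/2\<close> all other expectations are then finite.\<close>

lemma sum_Pow_moebius_transform:
  fixes f :: "'a set \<Rightarrow> 'b::ring_1"
  assumes "finite D"
  shows "(\<Sum>A\<in>Pow D. \<Sum>B\<in>Pow A. (-1) ^ (card A - card B) * f B) = f D"
proof -
  have "f D = (\<Sum>A\<in>Pow D. (-1) ^ card A * (\<Sum>B\<in>Pow A. (-1) ^ card B * f B))"
    by (rule inclusion_exclusion_symmetric) (simp_all add: assms)
  also have "\<dots> = (\<Sum>A\<in>Pow D. \<Sum>B\<in>Pow A. (-1) ^ (card A - card B) * f B)"
  proof (intro sum.cong refl)
    fix A assume "A \<in> Pow D"
    then have "finite A" using assms finite_subset by blast
    then have "(-1::'b) ^ (card A + card B) = (-1) ^ (card A - card B)" if "B \<subseteq> A" for B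
      using that by (simp add: neg_one_power_add_eq_neg_one_power_diff card_mono)
    then show "(-1) ^ card A * (\<Sum>B\<in>Pow A. (-1) ^ card B * f B) = (\<Sum>B\<in>Pow A. (-1) ^ (card A - card B) * f B)"
      by (auto simp: sum_distrib_left power_add intro!: sum.cong simp flip: mult.assoc)
  qed
  finally show ?thesis ..
qed

lemma pd_kernel_diag_nonneg:
  assumes "pd_kernel k Y" "a \<in> Y"
  shows "0 \<le> k a a"
  using assms(1)[unfolded pd_kernel_def, THEN conjunct2, rule_format, where n = 1 and c = "\<lambda>_. 1" and x = "\<lambda>_. a"] assms(2)
  by simp

lemma pd_kernel_abs_le:
  assumes "pd_kernel k Y" "a \<in> Y" "b \<in> Y"
  shows "\<bar>k a b\<bar> \<le> (k a a + k b b) / 2"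
proof -
  have sym: "k b a = k a b" using assms unfolding pd_kernel_def by blast
  have "0 \<le> k a a + 2 * s * k a b + s * s * k b b" for s :: real
  proof -
    let ?c = "\<lambda>i::nat. if i = 0 then 1 else s" and ?x = "\<lambda>i::nat. if i = 0 then a else b"
    have "0 \<le> (\<Sum>i<2. \<Sum>j<2. ?c i * ?c j * k (?x i) (?x j))"
      using assms by (intro pd_kernel_def[THEN iffD1, THEN conjunct2, rule_format]) auto
    then show ?thesis by (simp add: numeral_2_eq_2 sym algebra_simps)
  qed
  from this[of 1] this[of "-1"] show ?thesis by (simp add: abs_le_iff)
qed

lemma pair_measure_return_right:
  assumes "sigma_finite_measure M1" "y \<in> space M2"
  shows "M1 \<Otimes>\<^sub>M return M2 y = distr M1 (M1 \<Otimes>\<^sub>M M2) (\<lambda>x. (x, y))"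
proof (rule pair_measure_eqI)
  show "sigma_finite_measure (return M2 y)"
    using prob_space_return[OF assms(2)] by (simp add: prob_space_imp_sigma_finite)
  fix A B assume A: "A \<in> sets M1" and "B \<in> sets (return M2 y)"
  then have B: "B \<in> sets M2" by simp
  have "(\<lambda>x. (x, y)) -` (A \<times> B) \<inter> space M1 = (if y \<in> B then A else {})"
    using sets.sets_into_space[OF A] by auto
  then show "emeasure M1 A * emeasure (return M2 y) B
      = emeasure (distr M1 (M1 \<Otimes>\<^sub>M M2) (\<lambda>x. (x, y))) (A \<times> B)"
    using A B assms(2) by (simp add: emeasure_distr indicator_def)
qed (simp_all add: assms(1) cong: sets_pair_measure_cong)

lemma integral_pair_measure_return_right:
  fixes f :: "_ \<Rightarrow> real"
  assumes "sigma_finite_measure M1" "y \<in> space M2" "sets M1 = sets N1"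
    and "f \<in> borel_measurable (N1 \<Otimes>\<^sub>M M2)"
  shows "(\<integral>z. f z \<partial>(M1 \<Otimes>\<^sub>M return M2 y)) = (\<integral>x. f (x, y) \<partial>M1)"
proof -
  have "f \<in> borel_measurable (M1 \<Otimes>\<^sub>M M2)"
    using assms(4) by (simp cong: measurable_cong_sets sets_pair_measure_cong add: assms(3))
  then show ?thesis
    unfolding pair_measure_return_right[OF assms(1,2)] using assms(2) by (simp add: integral_distr)
qed

lemma mmd_sq_return:
  fixes k :: "'y \<Rightarrow> 'y \<Rightarrow> real"
  assumes Q: "prob_space Q" "sets Q = sets N" and y: "y \<in> space N"
    and k: "case_prod k \<in> borel_measurable (N \<Otimes>\<^sub>M N)"
  shows "mmd_sq k Q (return N y)
    = (\<integral>z. k (fst z) (snd z) \<partial>(Q \<Otimes>\<^sub>M Q)) - 2 * (\<integral>x. k x y \<partial>Q) + k y y"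
proof -
  have "sigma_finite_measure Q" "sigma_finite_measure (return N y)"
    using Q prob_space_return[OF y] by (simp_all add: prob_space_imp_sigma_finite)
  note integral_return_right =
      integral_pair_measure_return_right[OF this(1) y Q(2) k, unfolded case_prod_beta']
    and integral_return_both =
      integral_pair_measure_return_right[OF this(2) y sets_return k, unfolded case_prod_beta']
  have "(\<lambda>x. k x y) \<in> borel_measurable N"
    using k y by measurable
  then show ?thesis
    unfolding mmd_sq_def using y
    by (simp add: integral_return_right integral_return_both integral_return)
qed

lemma borel_measurable_mmd_sq_return:
  fixes k :: "'y \<Rightarrow> 'y \<Rightarrow> real"
  assumes Q: "prob_space Q" "sets Q = sets N" and k: "case_prod k \<in> borel_measurable (N \<Otimes>\<^sub>M N)"
  shows "(\<lambda>y. mmd_sq k Q (return N y)) \<in> borel_measurable N"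
proof -
  interpret Q: prob_space Q by fact
  have "case_prod k \<in> borel_measurable (Q \<Otimes>\<^sub>M N)"
    using k by (simp add: measurable_cong_sets[OF sets_pair_measure_cong[OF Q(2) refl] refl])
  then have "(\<lambda>y. (\<integral>z. k (fst z) (snd z) \<partial>(Q \<Otimes>\<^sub>M Q)) - 2 * (\<integral>x. k x y \<partial>Q) + k y y)
      \<in> borel_measurable N"
    using k by measurable
  then show ?thesis
    by (rule measurable_cong[THEN iffD1, rotated]) (simp add: mmd_sq_return[OF Q _ k])
qed

lemma integrable_pd_kernel_diag:
  fixes k :: "'y \<Rightarrow> 'y \<Rightarrow> real"
  assumes "sets Q = sets N" "pd_kernel k (space N)" "case_prod k \<in> borel_measurable (N \<Otimes>\<^sub>M N)"
    and "(\<integral>\<^sup>+ y. ennreal (k y y) \<partial>Q) < \<infinity>"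
  shows "integrable Q (\<lambda>y. k y y)"
proof -
  have "(\<lambda>y. k y y) \<in> borel_measurable Q"
    using assms(3) by (simp add: measurable_cong_sets[OF assms(1) refl])
  moreover have "(\<integral>\<^sup>+ y. ennreal \<bar>k y y\<bar> \<partial>Q) = (\<integral>\<^sup>+ y. ennreal (k y y) \<partial>Q)"
    using pd_kernel_diag_nonneg[OF assms(2)] sets_eq_imp_space_eq[OF assms(1)]
    by (intro nn_integral_cong) simp
  ultimately show ?thesis
    using assms(4) by (simp add: integrable_iff_bounded)
qed

lemma integrable_pd_kernel_pair:
  fixes k :: "'y \<Rightarrow> 'y \<Rightarrow> real"
  assumes Q: "prob_space Q" "sets Q = sets N" and pd: "pd_kernel k (space N)"
    and k: "case_prod k \<in> borel_measurable (N \<Otimes>\<^sub>M N)" and diag: "integrable Q (\<lambda>y. k y y)"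
  shows "integrable (Q \<Otimes>\<^sub>M Q) (case_prod k)"
proof (rule Bochner_Integration.integrable_bound)
  interpret pair_prob_space Q Q
    using Q by (simp add: pair_prob_space_def pair_sigma_finite_def prob_space_imp_sigma_finite)
  have kd: "(\<lambda>y. k y y) \<in> borel_measurable Q"
    using k by (simp add: measurable_cong_sets[OF Q(2) refl])
  have "integrable (Q \<Otimes>\<^sub>M Q) (\<lambda>z. k (fst z) (fst z))"
    using diag integrable_distr_eq[OF measurable_fst[of Q Q] kd]
    by (simp add: prob_space.distr_pair_fst[OF Q(1)])
  moreover have "integrable (Q \<Otimes>\<^sub>M Q) (\<lambda>z. k (snd z) (snd z))"
    using integrable_product_swap[OF calculation] by (simp add: case_prod_beta')
  ultimately show "integrable (Q \<Otimes>\<^sub>M Q) (\<lambda>z. (k (fst z) (fst z) + k (snd z) (snd z)) / 2)"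
    by simp
  show "AE z in Q \<Otimes>\<^sub>M Q. norm (case_prod k z) \<le> norm ((k (fst z) (fst z) + k (snd z) (snd z)) / 2)"
    using pd_kernel_abs_le[OF pd] pd_kernel_diag_nonneg[OF pd]
    by (fastforce simp: space_pair_measure sets_eq_imp_space_eq[OF Q(2)])
  show "case_prod k \<in> borel_measurable (Q \<Otimes>\<^sub>M Q)"
    using k by (simp add: measurable_cong_sets[OF sets_pair_measure_cong[OF Q(2) Q(2)] refl])
qed

lemma integral_mmd_sq_return:
  fixes k :: "'y \<Rightarrow> 'y \<Rightarrow> real"
  assumes Q: "prob_space Q" "sets Q = sets N" and pd: "pd_kernel k (space N)"
    and k: "case_prod k \<in> borel_measurable (N \<Otimes>\<^sub>M N)" and diag: "integrable Q (\<lambda>y. k y y)"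
  shows "(\<integral>y. mmd_sq k Q (return N y) \<partial>Q)
    = (\<integral>y. k y y \<partial>Q) - (\<integral>z. k (fst z) (snd z) \<partial>(Q \<Otimes>\<^sub>M Q))"
proof -
  interpret pair_prob_space Q Q
    using Q by (simp add: pair_prob_space_def pair_sigma_finite_def prob_space_imp_sigma_finite)
  define C where "C = (\<integral>z. k (fst z) (snd z) \<partial>(Q \<Otimes>\<^sub>M Q))"
  have k_int: "integrable (Q \<Otimes>\<^sub>M Q) (case_prod k)"
    using Q pd k diag by (rule integrable_pd_kernel_pair)
  have "(\<integral>y. (\<integral>x. k x y \<partial>Q) \<partial>Q) = C"
    using integral_snd[OF k_int] by (simp add: C_def case_prod_beta')
  moreover have "(\<integral>y. mmd_sq k Q (return N y) \<partial>Q) = (\<integral>y. C - 2 * (\<integral>x. k x y \<partial>Q) + k y y \<partial>Q)"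
    using sets_eq_imp_space_eq[OF Q(2)]
    by (intro Bochner_Integration.integral_cong refl) (simp add: mmd_sq_return[OF Q _ k] C_def)
  ultimately show ?thesis
    using integrable_snd[OF k_int] diag by (simp add: M1.prob_space C_def)
qed

lemma distr_restrict_eq_PiM:
  assumes M: "prob_space M" and X: "\<And>i. i \<in> I \<Longrightarrow> X i \<in> measurable M (S i)"
    and indep: "prob_space.indep_vars M S X I"
  shows "distr M (\<Pi>\<^sub>M i\<in>I. S i) (\<lambda>\<omega>. \<lambda>i\<in>I. X i \<omega>) = (\<Pi>\<^sub>M i\<in>I. distr M (S i) (X i))"
proof (cases "I = {}")
  case True
  interpret prob_space M by (rule M)
  have "(\<lambda>\<omega>. \<lambda>i\<in>I. X i \<omega>) \<in> measurable M (\<Pi>\<^sub>M i\<in>I. S i)"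
    using X by (rule measurable_restrict)
  then have one: "emeasure (distr M (\<Pi>\<^sub>M i\<in>I. S i) (\<lambda>\<omega>. \<lambda>i\<in>I. X i \<omega>)) {\<lambda>_. undefined} = 1"
    by (simp add: emeasure_distr True sets_PiM_empty emeasure_space_1 vimage_def restrict_def)
  show ?thesis
  proof (rule measure_eqI)
    fix A assume "A \<in> sets (distr M (\<Pi>\<^sub>M i\<in>I. S i) (\<lambda>\<omega>. \<lambda>i\<in>I. X i \<omega>))"
    then have "A = {} \<or> A = {\<lambda>_. undefined}"
      by (simp add: True sets_PiM_empty)
    then show "emeasure (distr M (\<Pi>\<^sub>M i\<in>I. S i) (\<lambda>\<omega>. \<lambda>i\<in>I. X i \<omega>)) A
        = emeasure (\<Pi>\<^sub>M i\<in>I. distr M (S i) (X i)) A"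
      using one True by auto
  qed (simp add: True sets_PiM_empty)
next
  case False
  then show ?thesis
    using prob_space.indep_vars_iff_distr_eq_PiM'[OF M False] X indep by blast
qed

lemma cond_law_empty: "cond_law I P N \<eta> {} x = distr (\<Pi>\<^sub>M i\<in>I. P i) N \<eta>"
  unfolding cond_law_def
  by (intro distr_cong refl arg_cong[where f = \<eta>])
    (auto simp: space_PiM merge_def fun_eq_iff PiE_def extensional_def)

lemma cond_law_full:
  assumes \<eta>: "\<eta> \<in> measurable (\<Pi>\<^sub>M i\<in>I. S i) N" and x: "x \<in> space (\<Pi>\<^sub>M i\<in>I. S i)"
  shows "cond_law I P N \<eta> I x = return N (\<eta> x)"
proof -
  have merge: "merge I {} (x, z) = x" for z
    using x by (auto simp: space_PiM merge_def fun_eq_iff PiE_def extensional_def)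
  have point: "(\<Pi>\<^sub>M i\<in>{}. P i) = return (\<Pi>\<^sub>M i\<in>{}. P i) (\<lambda>_. undefined)"
    by (rule measure_eqI) (auto simp: sets_PiM_empty)
  have "cond_law I P N \<eta> I x = distr (\<Pi>\<^sub>M i\<in>{}. P i) N (\<lambda>_. \<eta> x)"
    by (simp add: cond_law_def merge)
  also have "\<dots> = return N (\<eta> x)"
    using measurable_space[OF \<eta> x] by (subst point) (simp add: distr_return)
  finally show ?thesis .
qed

lemma integral_mmd_sq_cond_law_full:
  fixes k :: "'y \<Rightarrow> 'y \<Rightarrow> real"
  assumes \<mu>: "prob_space \<mu>" "sets \<mu> = sets (\<Pi>\<^sub>M i\<in>I. S i)" and \<eta>: "\<eta> \<in> measurable (\<Pi>\<^sub>M i\<in>I. S i) N"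
    and pd: "pd_kernel k (space N)" and k: "case_prod k \<in> borel_measurable (N \<Otimes>\<^sub>M N)"
    and diag: "integrable (distr \<mu> N \<eta>) (\<lambda>y. k y y)"
  defines "Q \<equiv> distr \<mu> N \<eta>"
  shows "(\<integral>x. mmd_sq k Q (cond_law I P N \<eta> I x) \<partial>\<mu>)
    = (\<integral>y. k y y \<partial>Q) - (\<integral>z. k (fst z) (snd z) \<partial>(Q \<Otimes>\<^sub>M Q))"
proof -
  have \<eta>': "\<eta> \<in> measurable \<mu> N"
    using \<eta> by (simp add: measurable_cong_sets[OF \<mu>(2) refl])
  have Q: "prob_space Q" "sets Q = sets N"
    unfolding Q_def using \<mu>(1) \<eta>' by (simp_all add: prob_space.prob_space_distr)
  have "(\<integral>x. mmd_sq k Q (cond_law I P N \<eta> I x) \<partial>\<mu>) = (\<integral>x. mmd_sq k Q (return N (\<eta> x)) \<partial>\<mu>)"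
    using \<eta> sets_eq_imp_space_eq[OF \<mu>(2)]
    by (intro Bochner_Integration.integral_cong refl) (simp add: cond_law_full)
  also have "\<dots> = (\<integral>y. mmd_sq k Q (return N y) \<partial>Q)"
    using integral_distr[OF \<eta>' borel_measurable_mmd_sq_return[OF Q k]] by (simp add: Q_def)
  also have "\<dots> = (\<integral>y. k y y \<partial>Q) - (\<integral>z. k (fst z) (snd z) \<partial>(Q \<Otimes>\<^sub>M Q))"
    using Q pd k diag unfolding Q_def by (rule integral_mmd_sq_return)
  finally show ?thesis .
qed

lemma cond_law_empty_eq_distr:
  assumes "prob_space M" "\<And>i. i \<in> I \<Longrightarrow> X i \<in> measurable M (S i)"
    and "prob_space.indep_vars M S X I" and "\<eta> \<in> measurable (\<Pi>\<^sub>M i\<in>I. S i) N"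
  shows "cond_law I (\<lambda>i. distr M (S i) (X i)) N \<eta> {} x = distr M N (\<lambda>\<omega>. \<eta> (\<lambda>i\<in>I. X i \<omega>))"
proof -
  have "(\<lambda>\<omega>. \<lambda>i\<in>I. X i \<omega>) \<in> measurable M (\<Pi>\<^sub>M i\<in>I. S i)"
    using assms(2) by (rule measurable_restrict)
  then show ?thesis
    using assms by (simp add: cond_law_empty distr_restrict_eq_PiM[symmetric] distr_distr comp_def)
qed

theorem mainTheorem1:
  fixes M :: "'a measure" and S :: "nat \<Rightarrow> 'x measure" and X :: "nat \<Rightarrow> 'a \<Rightarrow> 'x"
    and N :: "'y measure" and \<eta> :: "(nat \<Rightarrow> 'x) \<Rightarrow> 'y"
    and k :: "'y \<Rightarrow> 'y \<Rightarrow> real" and d :: nat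
  defines "P \<equiv> (\<lambda>i. distr M (S i) (X i))"
  defines "Y \<equiv> (\<lambda>\<omega>. \<eta> (\<lambda>i\<in>{1..d}. X i \<omega>))"
  defines "PY \<equiv> distr M N Y"
  assumes "prob_space M"
    and "\<And>i. i \<in> {1..d} \<Longrightarrow> X i \<in> measurable M (S i)"
    and "prob_space.indep_vars M S X {1..d}"
    and "\<eta> \<in> measurable (\<Pi>\<^sub>M i\<in>{1..d}. S i) N"
    and "pd_kernel k (space N)"
    and "case_prod k \<in> borel_measurable (N \<Otimes>\<^sub>M N)"
    and "\<And>A xA. A \<subseteq> {1..d} \<Longrightarrow> xA \<in> space (\<Pi>\<^sub>M i\<in>A. S i) \<Longrightarrow>
           (\<integral>\<^sup>+ y. ennreal (k y y) \<partial>(cond_law {1..d} P N \<eta> A xA)) < \<infinity>"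
  shows "(\<integral>\<omega>. k (Y \<omega>) (Y \<omega>) \<partial>M) - (\<integral>z. k (fst z) (snd z) \<partial>(PY \<Otimes>\<^sub>M PY))
       = (\<Sum>A\<in>Pow {1..d}. \<Sum>B\<in>Pow A. (-1::real) ^ (card A - card B) *
            (\<integral>xB. mmd_sq k PY (cond_law {1..d} P N \<eta> B xB)
               \<partial>(distr M (\<Pi>\<^sub>M i\<in>B. S i) (\<lambda>\<omega>. \<lambda>i\<in>B. X i \<omega>))))"
proof -
  interpret prob_space M by fact
  let ?X = "\<lambda>\<omega>. \<lambda>i\<in>{1..d}. X i \<omega>"
  have X: "?X \<in> measurable M (\<Pi>\<^sub>M i\<in>{1..d}. S i)"
    using assms(5) by (rule measurable_restrict)
  have Y: "Y \<in> measurable M N"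
    using measurable_comp[OF X assms(7)] by (simp add: Y_def comp_def)
  have PY_law_X: "distr (distr M (\<Pi>\<^sub>M i\<in>{1..d}. S i) ?X) N \<eta> = PY"
    using X assms(7) by (simp add: PY_def Y_def distr_distr comp_def)
  have "cond_law {1..d} P N \<eta> {} (\<lambda>_. undefined) = PY"
    unfolding P_def PY_def Y_def using prob_space_axioms assms(5-7) by (rule cond_law_empty_eq_distr)
  then have diag: "integrable PY (\<lambda>y. k y y)"
    using assms(10)[of "{}" "\<lambda>_. undefined"]
    by (intro integrable_pd_kernel_diag[OF _ assms(8,9)]) (simp_all add: PY_def)
  have kd: "(\<lambda>y. k y y) \<in> borel_measurable N"
    using assms(9) by measurable
  have E_diag: "(\<integral>y. k y y \<partial>PY) = (\<integral>\<omega>. k (Y \<omega>) (Y \<omega>) \<partial>M)"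
    unfolding PY_def using Y kd by (rule integral_distr)
  have "(\<Sum>A\<in>Pow {1..d}. \<Sum>B\<in>Pow A. (-1::real) ^ (card A - card B) *
            (\<integral>xB. mmd_sq k PY (cond_law {1..d} P N \<eta> B xB)
               \<partial>(distr M (\<Pi>\<^sub>M i\<in>B. S i) (\<lambda>\<omega>. \<lambda>i\<in>B. X i \<omega>))))
      = (\<integral>x. mmd_sq k PY (cond_law {1..d} P N \<eta> {1..d} x) \<partial>distr M (\<Pi>\<^sub>M i\<in>{1..d}. S i) ?X)"
    by (rule sum_Pow_moebius_transform) simp
  also have "\<dots> = (\<integral>y. k y y \<partial>PY) - (\<integral>z. k (fst z) (snd z) \<partial>(PY \<Otimes>\<^sub>M PY))"
    using integral_mmd_sq_cond_law_full[OF prob_space_distr[OF X] _ assms(7-9), of P,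
        unfolded PY_law_X] diag
    by simp
  finally show ?thesis
    using E_diag by linarith
qed

end
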